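(* Let $L$ be a positive integer, let $r$ be a positive integer with $\mathrm{degree}(r) < L$, and let $p = 2^L \oplus r$. For every positive integer $w$, the degree of $w \star 2^L \bmod p$ is at most $\mathrm{degree}(w) + \mathrm{degree}(r)$. Moreover, if $\mathrm{degree}(w) + \mathrm{degree}(r) < L$, then the degree of $w \star 2^L \bmod p$ is exactly $\mathrm{degree}(w) + \mathrm{degree}(r)$.
   Context: All operations are carry-less. For nonnegative integers $a,b$, with $a_i$ the $i$-th least significant bit of $a$, the carry-less product $a \star b$ is the integer whose $i$-th bit is $\bigoplus_{k=0}^{i} a_{i-k} b_k$; $\oplus$ is bitwise XOR. For a positive integer $x$, $\mathrm{degree}(x)$ is the index (starting at $0$) of its most significant nonzero bit; by convention $\mathrm{degree}(0) = -\infty$. For integers $a$ and $b \neq 0$ there are unique integers $\alpha,\beta$ with $a = \alpha \star b \oplus \beta$ and $\beta = 0$ or $\mathrm{degree}(\beta) < \mathrm{degree}(b)$; one writes $a \div b = \alpha$ and $a \bmod b = \beta$. Precedence: $\star$, $\bmod$, $\div$ first, then $\oplus$. *)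

theory Defs
  imports Main
begin

text \<open>Carry-less product: bit i of clmul a b is XOR over k \<le> i of a_(i-k) AND b_k.
  Only bits below the sum of the bit lengths can be nonzero, so a finite sum suffices.\<close>
definition clmul :: "nat \<Rightarrow> nat \<Rightarrow> nat" where
  "clmul a b = (\<Sum>i < Suc (a + b).
      (if odd (card {k. k \<le> i \<and> bit a (i - k) \<and> bit b k}) then 2 ^ i else 0))"

text \<open>Degree of a positive integer: index of its most significant set bit
  (only meaningful for x > 0; the value at 0 is irrelevant and always guarded).\<close>
definition cl_degree :: "nat \<Rightarrow> nat" where
  "cl_degree x = Max {i. bit x i}"

definition cl_mod :: "nat \<Rightarrow> nat \<Rightarrow> nat" where
  "cl_mod a b = (THE \<beta>. \<exists>\<alpha>. a = xor (clmul \<alpha> b) \<beta> \<and> (\<beta> = 0 \<or> cl_degree \<beta> < cl_degree b))"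

end

theory Submission
  imports Defs "HOL-Library.Z2" "HOL-Computational_Algebra.Polynomial"
begin

text \<open>Reading the bits of a number as coefficients identifies carry-less arithmetic with
  arithmetic in \<open>GF(2)[x]\<close>: xor becomes addition, the carry-less product becomes
  multiplication, \<open>cl_mod\<close> becomes polynomial remainder and \<open>cl_degree\<close> becomes the degree.
  Modulo \<open>p = x\<^sup>L + r\<close> we have \<open>x\<^sup>L \<equiv> r\<close>, so \<open>w x\<^sup>L mod p = w r mod p\<close>. Reducing modulo
  a polynomial never raises the degree, and leaves \<open>w r\<close>, of degree \<open>deg w + deg r\<close>,
  unchanged when that degree is below \<open>L = deg p\<close>.\<close>

lemma bit_nat_imp_less: "bit (a::nat) n \<Longrightarrow> n < a"
proof -
  assume "bit a n"
  then have "a div 2 ^ n \<noteq> 0"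
    by (metis bit_iff_odd even_zero)
  then have "2 ^ n \<le> a"
    by (simp add: div_eq_0_iff)
  moreover have "n < 2 ^ n"
    by simp
  ultimately show ?thesis
    by linarith
qed

lemma bit_sum_power2_iff:
  assumes "finite S"
  shows "bit (\<Sum>i\<in>S. (2::nat) ^ i) j \<longleftrightarrow> j \<in> S"
  using assms
proof (induction S arbitrary: j rule: finite_induct)
  case empty
  then show ?case by simp
next
  case (insert x S)
  have "\<not> bit (\<Sum>i\<in>S. (2::nat) ^ i) x"
    using insert by simp
  then have "(\<Sum>i\<in>insert x S. (2::nat) ^ i) = or (2 ^ x) (\<Sum>i\<in>S. 2 ^ i)"
    using insert.hyps
    by (simp, intro disjunctive_add_eq_or bit_eqI) (auto simp: bit_and_iff bit_exp_iff)
  then show ?case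
    using insert by (auto simp: bit_or_iff bit_exp_iff)
qed

lemma bit_clmul_iff:
  "bit (clmul a b) i \<longleftrightarrow> odd (card {k. k \<le> i \<and> bit a (i - k) \<and> bit b k})"
proof -
  let ?odd = "\<lambda>i. odd (card {k. k \<le> i \<and> bit a (i - k) \<and> bit b k})"
  have below: "i < Suc (a + b)" if "?odd i" for i
  proof -
    from that obtain k where "k \<le> i" "bit a (i - k)" "bit b k"
      by (metis (no_types, lifting) card.empty empty_Collect_eq even_zero)
    then show ?thesis
      using bit_nat_imp_less[of a "i - k"] bit_nat_imp_less[of b k] by linarith
  qed
  have "clmul a b = (\<Sum>i\<in>{i. i < Suc (a + b) \<and> ?odd i}. 2 ^ i)"
    unfolding clmul_def
    by (subst sum.inter_filter[symmetric]) (auto simp: Collect_conj_eq lessThan_def)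
  then show ?thesis
    using below by (auto simp: bit_sum_power2_iff)
qed

lemma of_nat_bit_eq: "(of_nat n :: bit) = of_bool (odd n)"
  by (induction n) auto

lemma uminus_bit_poly [simp]: "- (p :: bit poly) = p"
  by (rule poly_eqI) simp

definition poly_of_nat :: "nat \<Rightarrow> bit poly" where
  "poly_of_nat n = Poly (map (\<lambda>i. of_bool (bit n i)) [0..<n])"

lemma coeff_poly_of_nat [simp]: "coeff (poly_of_nat n) i = of_bool (bit n i)"
  using bit_nat_imp_less[of n i]
  by (cases "i < n") (auto simp: poly_of_nat_def nth_default_def)

lemma poly_of_nat_inject [simp]: "poly_of_nat a = poly_of_nat b \<longleftrightarrow> a = b"
proof
  assume eq: "poly_of_nat a = poly_of_nat b"
  show "a = b"
  proof (rule bit_eqI)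
    fix n
    have "coeff (poly_of_nat a) n = coeff (poly_of_nat b) n"
      using eq by simp
    then show "bit a n = bit b n"
      by (cases "bit a n"; cases "bit b n") simp_all
  qed
qed simp

lemma poly_of_nat_0 [simp]: "poly_of_nat 0 = 0"
  by (rule poly_eqI) simp

lemma poly_of_nat_eq_0_iff [simp]: "poly_of_nat a = 0 \<longleftrightarrow> a = 0"
  using poly_of_nat_inject[of a 0] by simp

lemma poly_of_nat_xor: "poly_of_nat (xor a b) = poly_of_nat a + poly_of_nat b"
  by (rule poly_eqI) (simp add: bit_xor_iff)

lemma poly_of_nat_power2: "poly_of_nat (2 ^ L) = monom 1 L"
  by (rule poly_eqI) (auto simp: coeff_monom bit_exp_iff)

lemma poly_of_nat_clmul: "poly_of_nat (clmul a b) = poly_of_nat a * poly_of_nat b"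
proof (rule poly_eqI)
  fix i
  have "coeff (poly_of_nat a * poly_of_nat b) i
      = (\<Sum>k\<le>i. of_bool (bit b k \<and> bit a (i - k)))"
    by (simp add: mult.commute[of "poly_of_nat a"] coeff_mult)
  also have "\<dots> = of_nat (card {k. k \<le> i \<and> bit a (i - k) \<and> bit b k})"
    by (simp add: sum.If_cases Int_def atMost_def conj_commute)
  finally show "coeff (poly_of_nat (clmul a b)) i = coeff (poly_of_nat a * poly_of_nat b) i"
    by (simp add: bit_clmul_iff of_nat_bit_eq)
qed

lemma surj_poly_of_nat: "surj poly_of_nat"
proof -
  have "q \<in> range poly_of_nat" for q
  proof (induction q rule: pCons_induct)
    case 0
    then show ?case
      using poly_of_nat_0 by (metis rangeI)
  next
    case (pCons c p)
    then obtain n where n: "poly_of_nat n = p"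
      by blast
    have "poly_of_nat (of_bool (c = 1) + 2 * n) = pCons c p"
    proof (rule poly_eqI)
      fix i
      show "coeff (poly_of_nat (of_bool (c = 1) + 2 * n)) i = coeff (pCons c p) i"
        by (cases i; cases c) (auto simp: bit_0 bit_Suc simp flip: n)
    qed
    then show ?case
      by (metis rangeI)
  qed
  then show ?thesis
    by blast
qed

lemma degree_poly_of_nat: "a > 0 \<Longrightarrow> degree (poly_of_nat a) = cl_degree a"
proof -
  assume "a > 0"
  then have "poly_of_nat a \<noteq> 0"
    by simp
  then have top: "bit a (degree (poly_of_nat a))"
    using leading_coeff_neq_0[of "poly_of_nat a"] by simp
  have fin: "finite {i. bit a i}"
    using bit_nat_imp_less finite_nat_set_iff_bounded by blast
  then have "bit a (cl_degree a)"
    unfolding cl_degree_def using top Max_in[of "{i. bit a i}"] by auto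
  then have "cl_degree a \<le> degree (poly_of_nat a)"
    by (intro le_degree) simp
  moreover have "degree (poly_of_nat a) \<le> cl_degree a"
    unfolding cl_degree_def using fin top by simp
  ultimately show ?thesis
    by simp
qed

lemma poly_of_nat_cl_mod:
  assumes "b > 0"
  shows "poly_of_nat (cl_mod a b) = poly_of_nat a mod poly_of_nat b"
proof -
  let ?A = "poly_of_nat a" and ?B = "poly_of_nat b"
  obtain q m where q: "poly_of_nat q = ?A div ?B" and m: "poly_of_nat m = ?A mod ?B"
    using surj_poly_of_nat by (metis surjD)
  have remainder: "poly_of_nat \<beta> = ?A mod ?B"
    if decomp: "a = xor (clmul \<alpha> b) \<beta>" and small: "\<beta> = 0 \<or> cl_degree \<beta> < cl_degree b"
    for \<alpha> \<beta>
  proof -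
    have "?A = poly_of_nat \<alpha> * ?B + poly_of_nat \<beta>"
      using decomp by (simp add: poly_of_nat_xor poly_of_nat_clmul)
    then have "?A mod ?B = poly_of_nat \<beta> mod ?B"
      by simp
    also have "\<dots> = poly_of_nat \<beta>"
      using small assms by (cases "\<beta> = 0") (auto intro: mod_poly_less simp: degree_poly_of_nat)
    finally show ?thesis ..
  qed
  have "a = xor (clmul q b) m"
    by (simp flip: poly_of_nat_inject add: poly_of_nat_xor poly_of_nat_clmul q m)
  moreover have "m = 0 \<or> cl_degree m < cl_degree b"
    using degree_mod_less'[of ?B ?A] assms
    by (cases "m = 0") (simp_all add: degree_poly_of_nat flip: m)
  ultimately have "cl_mod a b = m"
    unfolding cl_mod_def using remainder m
    by (intro the_equality) (blast, metis poly_of_nat_inject)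
  then show ?thesis
    using m by simp
qed

lemma degree_mod_le: "degree (a mod b) \<le> degree (a :: 'a::field poly)"
proof (cases "degree a < degree b")
  case True
  then show ?thesis
    by (simp add: mod_poly_less)
next
  case False
  then show ?thesis
    using degree_mod_less'[of b a] by (cases "b = 0"; cases "a mod b = 0") auto
qed

lemma mult_monom_mod_binomial:
  fixes A R :: "'a::field poly"
  shows "(A * monom 1 L) mod (monom 1 L + R) = (- A * R) mod (monom 1 L + R)"
proof -
  have "A * monom 1 L - - A * R = A * (monom 1 L + R)"
    by (simp add: algebra_simps)
  then show ?thesis
    by (simp only: mod_eq_dvd_iff dvd_triv_right)
qed

lemma degree_monom_add_less:
  fixes R :: "'a::comm_ring_1 poly"
  assumes "degree R < L"
  shows "degree (monom 1 L + R) = L"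
  using assms by (subst degree_add_eq_left) (simp_all add: degree_monom_eq)

lemma poly_of_nat_cl_mod_clmul_power2:
  assumes "r > 0" and "cl_degree r < L"
  shows "poly_of_nat (cl_mod (clmul w (2 ^ L)) (xor (2 ^ L) r))
       = (poly_of_nat w * poly_of_nat r) mod (monom 1 L + poly_of_nat r)"
proof -
  have "degree (poly_of_nat (xor (2 ^ L) r)) = L"
    using assms by (simp add: poly_of_nat_xor poly_of_nat_power2 degree_monom_add_less
        degree_poly_of_nat)
  then have "xor (2 ^ L) r > 0"
    using assms(2) by (intro gr0I) auto
  then show ?thesis
    by (simp add: poly_of_nat_cl_mod poly_of_nat_clmul poly_of_nat_xor poly_of_nat_power2
        mult_monom_mod_binomial)
qed

theorem lemma8:
  fixes L r w :: nat
  assumes "L > 0" and "r > 0" and "cl_degree r < L" and "w > 0"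
  shows "(cl_mod (clmul w (2 ^ L)) (xor (2 ^ L) r) = 0 \<or>
           cl_degree (cl_mod (clmul w (2 ^ L)) (xor (2 ^ L) r)) \<le> cl_degree w + cl_degree r)
       \<and> (cl_degree w + cl_degree r < L \<longrightarrow>
           cl_mod (clmul w (2 ^ L)) (xor (2 ^ L) r) \<noteq> 0 \<and>
           cl_degree (cl_mod (clmul w (2 ^ L)) (xor (2 ^ L) r)) = cl_degree w + cl_degree r)"
proof -
  define c where "c = cl_mod (clmul w (2 ^ L)) (xor (2 ^ L) r)"
  define P where "P = monom 1 L + poly_of_nat r"
  have poly_c: "poly_of_nat c = (poly_of_nat w * poly_of_nat r) mod P"
    unfolding c_def P_def using assms(2,3) by (rule poly_of_nat_cl_mod_clmul_power2)
  have degree_P: "degree P = L"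
    unfolding P_def using assms by (simp add: degree_monom_add_less degree_poly_of_nat)
  have degree_wr: "degree (poly_of_nat w * poly_of_nat r) = cl_degree w + cl_degree r"
    using assms by (simp add: degree_mult_eq degree_poly_of_nat)
  have "c = 0 \<or> cl_degree c \<le> cl_degree w + cl_degree r"
    using degree_mod_le[of "poly_of_nat w * poly_of_nat r" P] poly_c degree_wr
      degree_poly_of_nat[of c]
    by (cases "c = 0") auto
  moreover have "c \<noteq> 0 \<and> cl_degree c = cl_degree w + cl_degree r"
    if "cl_degree w + cl_degree r < L"
  proof -
    have poly_c_eq: "poly_of_nat c = poly_of_nat w * poly_of_nat r"
      using poly_c degree_wr that degree_P by (simp add: mod_poly_less)
    then have "c \<noteq> 0"
      using assms by (metis mult_eq_0_iff poly_of_nat_eq_0_iff not_gr0)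
    then show ?thesis
      using poly_c_eq degree_wr degree_poly_of_nat[of c] by simp
  qed
  ultimately show ?thesis
    unfolding c_def by blast
qed

end
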